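(* Let $N\ge 2$ be an integer. Define $A,B:\mathbb{R}^2\to\mathbb{R}^2$ by $B=0$ (the zero operator) and $A(x_1,x_2)=\left(-\tfrac{x_2}{\sqrt{N-1}},\ \tfrac{x_1}{\sqrt{N-1}}\right)$. Then $A$ and $B$ are maximally monotone, $B$ is $\beta$-cocoercive for every $\beta>0$, and for the Douglas–Rachford splitting iteration with stepsize $\gamma=1$ and relaxation $\lambda=1$, the DR operator $T$ has unique fixed point $w^\star=0$ and for every initial point $w^1\in\mathbb{R}^2$, $$\|Tw^N-w^N\|^2=\frac{(N-1)^{N-1}}{N^N}\,\|w^1-w^\star\|^2 .$$
   Context: For a maximally monotone operator $M$, $J_M=(I+M)^{-1}$ and $R_M=2J_M-I$. For maximally monotone $A,B$, $\gamma>0$, $\lambda\in(0,2)$, the DR operator is $T=(1-\tfrac{\lambda}{2})I+\tfrac{\lambda}{2}R_{\gamma A}R_{\gamma B}$, and the DRS iteration is $x^k=J_{\gamma B}(w^k)$, $y^k=J_{\gamma A}(2x^k-w^k)$, $w^{k+1}=w^k+\lambda(y^k-x^k)=Tw^k$. An operator $M$ is $\beta$-cocoercive ($\beta>0$) if $\langle u-v,x-y\rangle\ge\beta\|u-v\|^2$ for all $(x,u),(y,v)$ in the graph of $M$. *)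

theory Defs
  imports "HOL-Analysis.Analysis"
begin

text \<open>Set-valued operators on a real inner product space are modelled as
  functions M :: 'a \<Rightarrow> 'a set (the graph is {(x,u). u \<in> M x}).\<close>

definition monotone_op :: "('a::real_inner \<Rightarrow> 'a set) \<Rightarrow> bool" where
  "monotone_op M \<longleftrightarrow>
     (\<forall>x y u v. u \<in> M x \<longrightarrow> v \<in> M y \<longrightarrow> inner (u - v) (x - y) \<ge> 0)"

definition max_monotone :: "('a::real_inner \<Rightarrow> 'a set) \<Rightarrow> bool" where
  "max_monotone M \<longleftrightarrow> monotone_op M \<and>
     (\<forall>M'. monotone_op M' \<and> (\<forall>x. M x \<subseteq> M' x) \<longrightarrow> M' = M)"

definition cocoercive :: "real \<Rightarrow> ('a::real_inner \<Rightarrow> 'a set) \<Rightarrow> bool" where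
  "cocoercive \<beta> M \<longleftrightarrow> \<beta> > 0 \<and>
     (\<forall>x y u v. u \<in> M x \<longrightarrow> v \<in> M y \<longrightarrow> inner (u - v) (x - y) \<ge> \<beta> * (norm (u - v))\<^sup>2)"

definition scale_op :: "real \<Rightarrow> ('a::real_vector \<Rightarrow> 'a set) \<Rightarrow> 'a \<Rightarrow> 'a set" where
  "scale_op \<gamma> M x = (\<lambda>u. \<gamma> *\<^sub>R u) ` M x"

text \<open>Resolvent J_M = (I + M)^{-1}: J_M w is the (unique, for maximally monotone M)
  point x with w \<in> x + M x.\<close>
definition resolvent :: "('a::real_vector \<Rightarrow> 'a set) \<Rightarrow> 'a \<Rightarrow> 'a" where
  "resolvent M w = (THE x. w - x \<in> M x)"

definition reflected_resolvent :: "('a::real_vector \<Rightarrow> 'a set) \<Rightarrow> 'a \<Rightarrow> 'a" where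
  "reflected_resolvent M w = 2 *\<^sub>R resolvent M w - w"

definition DR_op :: "('a::real_vector \<Rightarrow> 'a set) \<Rightarrow> ('a \<Rightarrow> 'a set) \<Rightarrow> real \<Rightarrow> real \<Rightarrow> 'a \<Rightarrow> 'a" where
  "DR_op A B \<gamma> lam w = (1 - lam / 2) *\<^sub>R w
     + (lam / 2) *\<^sub>R reflected_resolvent (scale_op \<gamma> A) (reflected_resolvent (scale_op \<gamma> B) w)"

text \<open>DRS iterates with w^1 given and w^{k+1} = T w^k, so w^k = T^(k-1) w^1.\<close>
definition DRS_iter :: "('a::real_vector \<Rightarrow> 'a set) \<Rightarrow> ('a \<Rightarrow> 'a set) \<Rightarrow> real \<Rightarrow> real \<Rightarrow> 'a \<Rightarrow> nat \<Rightarrow> 'a" where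
  "DRS_iter A B \<gamma> lam w1 k = (DR_op A B \<gamma> lam ^^ (k - 1)) w1"

end

(*
  With B = 0 and gamma = lambda = 1 the DR operator is just the resolvent J of A.
  A is a linear map L = kappa * (quarter turn), kappa = 1/sqrt(N-1): it is skew
  (<L x, x> = 0), hence maximally monotone, and it scales norms by kappa.  Writing
  w = J w + L (J w), orthogonality gives |J w|^2 = |w|^2 / (1 + kappa^2), and the
  residual J w - w = - L (J w) has norm kappa |J w|.  As w^N = T^(N-1) w^1,
  |T w^N - w^N|^2 = kappa^2 / (1 + kappa^2)^N |w^1|^2 = (N-1)^(N-1) / N^N |w^1|^2.
*)
theory Submission
  imports Defs
begin

lemma scale_op_one [simp]: "scale_op 1 M = M"
  by (simp add: scale_op_def fun_eq_iff)

lemma resolvent_eqI: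
  assumes mono: "monotone_op M" and z: "w - z \<in> M z"
  shows "resolvent M w = z"
  unfolding resolvent_def
proof (rule the_equality)
  fix y assume "w - y \<in> M y"
  then have "inner ((w - y) - (w - z)) (y - z) \<ge> 0"
    using mono z unfolding monotone_op_def by blast
  then have "inner (y - z) (y - z) \<le> 0"
    by (simp add: inner_diff_left inner_commute algebra_simps)
  then have "y - z = 0" using inner_gt_zero_iff[of "y - z"] by linarith
  then show "y = z" by simp
qed (fact z)

lemma scale_op_zero_op: "scale_op \<gamma> (\<lambda>_. {0}) = (\<lambda>_. {0})"
  by (simp add: scale_op_def fun_eq_iff)

lemma resolvent_zero_op: "resolvent (\<lambda>_. {0}) w = w"
  by (simp add: resolvent_def)

lemma DR_op_zero_right:
  "DR_op A (\<lambda>_. {0}) \<gamma> lam w = (1 - lam) *\<^sub>R w + lam *\<^sub>R resolvent (scale_op \<gamma> A) w"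
proof -
  have "reflected_resolvent (scale_op \<gamma> (\<lambda>_. {0})) w = w"
    unfolding reflected_resolvent_def scale_op_zero_op resolvent_zero_op by (simp add: scaleR_2)
  then show ?thesis
    unfolding DR_op_def reflected_resolvent_def
    by (simp add: algebra_simps) (simp flip: scaleR_add_left)
qed

lemma monotone_op_skew_linear:
  assumes "linear L" and skew: "\<And>x. inner (L x) x = 0"
  shows "monotone_op (\<lambda>x. {L x})"
  unfolding monotone_op_def
  using skew by (simp add: linear_diff[OF \<open>linear L\<close>, symmetric])

lemma max_monotone_skew_linear:
  assumes L: "linear L" and skew: "\<And>x. inner (L x) x = 0"
  shows "max_monotone (\<lambda>x. {L x})"
  unfolding max_monotone_def
proof (intro conjI allI impI monotone_op_skew_linear[OF assms])
  fix M' assume "monotone_op M' \<and> (\<forall>x. {L x} \<subseteq> M' x)"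
  then have mono: "monotone_op M'" and graph: "\<And>x. L x \<in> M' x"
    by auto
  have "u = L x" if u: "u \<in> M' x" for x u
  proof -
    define d where "d = u - L x"
    \<comment> \<open>Testing u against the graph point at x + d, skewness removes the L-term.\<close>
    have "inner (u - L (x + d)) (x - (x + d)) \<ge> 0"
      using mono u graph[of "x + d"] unfolding monotone_op_def by blast
    moreover have "u - L (x + d) = d - L d" and "x - (x + d) = - d"
      by (simp_all add: d_def linear_add[OF L])
    ultimately have "inner d d \<le> inner (L d) d"
      by (simp add: inner_diff_left)
    then have "d = 0"
      using skew[of d] inner_gt_zero_iff[of d] by linarith
    then show "u = L x" by (simp add: d_def)
  qed
  then show "M' = (\<lambda>x. {L x})"
    using graph by blast
qed

lemma resolvent_skew_linear:
  fixes L :: "'a::euclidean_space \<Rightarrow> 'a"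
  assumes L: "linear L" and skew: "\<And>x. inner (L x) x = 0"
  shows "w - resolvent (\<lambda>x. {L x}) w = L (resolvent (\<lambda>x. {L x}) w)"
proof -
  have lin: "linear (\<lambda>x. x + L x)"
    using L by (simp add: linear_compose_add linear_id[unfolded id_def])
  have "x = 0" if "x + L x = 0" for x
  proof -
    have "inner (x + L x) x = inner x x"
      using skew[of x] by (simp add: inner_add_left)
    then show "x = 0" using that by simp
  qed
  then have "inj (\<lambda>x. x + L x)"
    unfolding linear_injective_0[OF lin] by blast
  then have "surj (\<lambda>x. x + L x)"
    using lin linear_injective_imp_surjective by blast
  then obtain z where z: "w = z + L z"
    by (metis surjD)
  then have "resolvent (\<lambda>x. {L x}) w = z"
    by (intro resolvent_eqI monotone_op_skew_linear L skew) simp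
  then show ?thesis using z by simp
qed

lemma norm_resolvent_skew_similarity:
  fixes L :: "'a::euclidean_space \<Rightarrow> 'a"
  assumes L: "linear L" and skew: "\<And>x. inner (L x) x = 0"
    and similar: "\<And>x. norm (L x) = \<kappa> * norm x"
  shows "(norm (resolvent (\<lambda>x. {L x}) w))\<^sup>2 = (norm w)\<^sup>2 / (1 + \<kappa>\<^sup>2)"
proof -
  define z where "z = resolvent (\<lambda>x. {L x}) w"
  have "w = z + L z"
    using resolvent_skew_linear[OF L skew, of w] by (simp add: z_def algebra_simps)
  then have "(norm w)\<^sup>2 = (norm z)\<^sup>2 + (norm (L z))\<^sup>2"
    using skew[of z] by (simp add: norm_add_Pythagorean orthogonal_def inner_commute)
  also have "\<dots> = (1 + \<kappa>\<^sup>2) * (norm z)\<^sup>2"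
    by (simp add: similar power_mult_distrib algebra_simps)
  finally have "(norm w)\<^sup>2 = (1 + \<kappa>\<^sup>2) * (norm z)\<^sup>2" .
  moreover have "1 + \<kappa>\<^sup>2 > 0"
    by (simp add: add_pos_nonneg)
  ultimately show ?thesis
    by (simp add: z_def field_simps)
qed

lemma norm_funpow_power2:
  fixes f :: "'a::real_normed_vector \<Rightarrow> 'a"
  assumes "\<And>w. (norm (f w))\<^sup>2 = c * (norm w)\<^sup>2"
  shows "(norm ((f ^^ k) w))\<^sup>2 = c ^ k * (norm w)\<^sup>2"
proof (induction k)
  case (Suc k)
  then show ?case by (simp add: assms)
qed simp

lemma resolvent_skew_similarity_iterate_residual:
  fixes L :: "'a::euclidean_space \<Rightarrow> 'a"
  assumes L: "linear L" and skew: "\<And>x. inner (L x) x = 0"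
    and similar: "\<And>x. norm (L x) = \<kappa> * norm x"
  defines "J \<equiv> resolvent (\<lambda>x. {L x})"
  shows "(norm (J ((J ^^ n) w) - (J ^^ n) w))\<^sup>2 = \<kappa>\<^sup>2 / (1 + \<kappa>\<^sup>2) ^ Suc n * (norm w)\<^sup>2"
proof -
  have "norm (J v - v) = \<kappa> * norm (J v)" for v
    using resolvent_skew_linear[OF L skew, of v] similar
    by (metis J_def norm_minus_commute)
  then have "(norm (J ((J ^^ n) w) - (J ^^ n) w))\<^sup>2 = \<kappa>\<^sup>2 * (norm ((J ^^ Suc n) w))\<^sup>2"
    by (simp add: power_mult_distrib)
  also have "\<dots> = \<kappa>\<^sup>2 * ((1 / (1 + \<kappa>\<^sup>2)) ^ Suc n * (norm w)\<^sup>2)"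
    using norm_resolvent_skew_similarity[OF L skew similar]
    by (subst norm_funpow_power2[of J "1 / (1 + \<kappa>\<^sup>2)"]) (simp_all add: J_def)
  finally show ?thesis
    by (simp add: power_one_over)
qed

lemma resolvent_skew_similarity_fixed_points:
  fixes L :: "'a::euclidean_space \<Rightarrow> 'a"
  assumes L: "linear L" and skew: "\<And>x. inner (L x) x = 0"
    and similar: "\<And>x. norm (L x) = \<kappa> * norm x" and "\<kappa> > 0"
  shows "{w. resolvent (\<lambda>x. {L x}) w = w} = {0}"
proof safe
  fix w assume "resolvent (\<lambda>x. {L x}) w = w"
  then have "L w = 0"
    using resolvent_skew_linear[OF L skew, of w] by simp
  then show "w = 0"
    using similar[of w] \<open>\<kappa> > 0\<close> by simp
next
  show "resolvent (\<lambda>x. {L x}) 0 = 0"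
    by (intro resolvent_eqI monotone_op_skew_linear L skew) (simp add: linear_0[OF L])
qed

definition rot90 :: "real^2 \<Rightarrow> real^2" where
  "rot90 x = vector [- x$2, x$1]"

lemma rot90_nth [simp]: "rot90 x $ 1 = - x$2" "rot90 x $ 2 = x$1"
  by (simp_all add: rot90_def)

lemma linear_rot90: "linear rot90"
  by (intro linearI) (simp_all add: vec_eq_iff forall_2)

lemma inner_rot90_self: "inner (rot90 x) x = 0"
  by (simp add: inner_vec_def sum_2)

lemma norm_rot90: "norm (rot90 x) = norm x"
  by (simp add: norm_eq_sqrt_inner inner_vec_def sum_2 add.commute)

lemma inverse_pred_div_power_eq:
  fixes n :: nat
  assumes "n \<ge> 2"
  shows "inverse (real n - 1) / (1 + inverse (real n - 1)) ^ n = (real n - 1) ^ (n - 1) / real n ^ n"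
proof -
  have pos: "real n - 1 > 0" using assms by simp
  have "1 + inverse (real n - 1) = real n / (real n - 1)"
    using pos by (simp add: field_simps)
  then have "inverse (real n - 1) / (1 + inverse (real n - 1)) ^ n
      = inverse (real n - 1) * (real n - 1) ^ n / real n ^ n"
    by (simp add: power_divide)
  also have "(real n - 1) ^ n = (real n - 1) * (real n - 1) ^ (n - 1)"
    using assms by (metis Suc_diff_1 less_le_trans pos2 power_Suc)
  finally show ?thesis
    using pos by simp
qed

theorem mainTheorem3:
  fixes N :: nat and A B :: "real^2 \<Rightarrow> (real^2) set"
  assumes hN: "N \<ge> 2"
    and hA: "\<And>x. A x = {vector [- x$2 / sqrt (real N - 1), x$1 / sqrt (real N - 1)]}"
    and hB: "\<And>x. B x = {0}"
  shows "max_monotone A \<and> max_monotone B \<and> (\<forall>\<beta>>0. cocoercive \<beta> B)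
     \<and> {w. DR_op A B 1 1 w = w} = {0}
     \<and> (\<forall>w1. (norm (DR_op A B 1 1 (DRS_iter A B 1 1 w1 N) - DRS_iter A B 1 1 w1 N))\<^sup>2
            = (real N - 1) ^ (N - 1) / real N ^ N * (norm (w1 - 0))\<^sup>2)"
proof -
  define \<kappa> where "\<kappa> = 1 / sqrt (real N - 1)"
  define L where "L = (\<lambda>x. \<kappa> *\<^sub>R rot90 x)"
  have \<kappa>: "\<kappa> > 0" "\<kappa>\<^sup>2 = inverse (real N - 1)"
    using hN by (simp_all add: \<kappa>_def power_one_over inverse_eq_divide)
  have L: "linear L" "\<And>x. inner (L x) x = 0" "\<And>x. norm (L x) = \<kappa> * norm x"
    using \<kappa>(1) linear_compose_scale_right[OF linear_rot90]
    by (simp_all add: L_def inner_rot90_self norm_rot90)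
  have A_eq: "A = (\<lambda>x. {L x})"
    using hA by (simp add: fun_eq_iff vec_eq_iff forall_2 L_def \<kappa>_def)
  have B_eq: "B = (\<lambda>_. {0})"
    using hB by (simp add: fun_eq_iff)
  have T_eq: "DR_op A B 1 1 = resolvent (\<lambda>x. {L x})"
    by (simp add: fun_eq_iff A_eq B_eq DR_op_zero_right)
  have "(norm (DR_op A B 1 1 (DRS_iter A B 1 1 w1 N) - DRS_iter A B 1 1 w1 N))\<^sup>2
      = (real N - 1) ^ (N - 1) / real N ^ N * (norm w1)\<^sup>2" for w1
    using resolvent_skew_similarity_iterate_residual[OF L, of "N - 1" w1] hN
    by (simp add: DRS_iter_def T_eq \<kappa>(2) inverse_pred_div_power_eq)
  moreover have "\<forall>\<beta>>0. cocoercive \<beta> B"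
    by (simp add: cocoercive_def B_eq)
  ultimately show ?thesis
    using max_monotone_skew_linear[OF L(1,2)] max_monotone_skew_linear[OF linear_zero]
      resolvent_skew_similarity_fixed_points[OF L \<kappa>(1)]
    by (simp add: T_eq, simp add: A_eq B_eq)
qed

end
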